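(* Fix $\rho>0$ and $\nu\in(0,1)$. (I) For $\lambda_1\ge0$, $\lambda_3>0$ and $x\in[0,1]$ define $F_U(\lambda_1,\lambda_3;x):=1+\lambda_3\big(1-\exp\big(\tfrac{\lambda_1}{\lambda_3}(x-\nu)+\rho\big)\big)$. Fix $0<t_{\min}\le t_{\max}$ and suppose $t:=\lambda_1/\lambda_3\in[t_{\min},t_{\max}]$. If $0\le\lambda_3<\frac{1}{e^{\rho+t(1-\nu)}-1}$, then $F_U(\lambda_1,\lambda_3;x)>0$ for all $x\in[0,1]$. Moreover, for each fixed $x$, $(\lambda_1,\lambda_3)\mapsto F_U(\lambda_1,\lambda_3;x)$ is concave on $\{\lambda_3>0\}$; hence $g_U:=\log F_U$ is exp-concave on any compact subset of $\{\lambda_3>0\}$ on which $F_U>0$. (II) For $\beta>0$, $\gamma\ge0$, set $A(\beta,\nu):=e^{-\rho+\beta\nu}$ and $F_L(\gamma;\beta,\nu,x):=1+\gamma(e^{\beta x}-A(\beta,\nu))$, $x\in[0,1]$. Then $\gamma\mapsto F_L(\gamma;\beta,\nu,x)$ is affine, and $\min_{x\in[0,1]}F_L(\gamma;\beta,\nu,x)=1+\gamma(1-A(\beta,\nu))$. Consequently: if $A(\beta,\nu)\le1$ then $F_L(\gamma;\beta,\nu,x)\ge1$ for all $\gamma\ge0$, $x\in[0,1]$; if $A(\beta,\nu)>1$ then $F_L(\gamma;\beta,\nu,x)>0$ for all $x\in[0,1]$ whenever $0\le\gamma<\frac{1}{A(\beta,\nu)-1}$. On any compact interval of $\gamma$ on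 which $F_L>0$, $g_L:=\log F_L$ is exp-concave.
   Context: A function $g$ on a convex set is exp-concave if $e^{g}$ is concave there. *)

theory Defs
  imports "HOL-Analysis.Analysis"
begin

definition exp_concave_on :: "'a::real_vector set \<Rightarrow> ('a \<Rightarrow> real) \<Rightarrow> bool" where
  "exp_concave_on S g \<longleftrightarrow> convex S \<and> concave_on S (\<lambda>p. exp (g p))"

definition F_U :: "real \<Rightarrow> real \<Rightarrow> real \<Rightarrow> real \<Rightarrow> real \<Rightarrow> real" where
  "F_U \<rho> \<nu> l1 l3 x = 1 + l3 * (1 - exp ((l1 / l3) * (x - \<nu>) + \<rho>))"

definition A_LB :: "real \<Rightarrow> real \<Rightarrow> real \<Rightarrow> real" where
  "A_LB \<rho> \<beta> \<nu> = exp (- \<rho> + \<beta> * \<nu>)"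

definition F_L :: "real \<Rightarrow> real \<Rightarrow> real \<Rightarrow> real \<Rightarrow> real \<Rightarrow> real" where
  "F_L \<rho> \<gamma> \<beta> \<nu> x = 1 + \<gamma> * (exp (\<beta> * x) - A_LB \<rho> \<beta> \<nu>)"

end

(* Writing t = l1 / l3, F_U = 1 + l3 - l3 * exp (t (x - nu) + rho): the subtracted term is the
   perspective (a, s) |-> s f (a / s) of the convex function f z = exp (z (x - nu) + rho), and
   perspectives of convex functions are jointly convex, so F_U is concave in (l1, l3).
   F_L is affine in gamma, hence concave. Where a concave function is positive, exp o ln of it is
   itself, so exp-concavity of its logarithm is just its concavity. Positivity of F_U follows
   since its exponent is largest at x = 1; F_L is increasing in x, so its minimum is at x = 0. *)
theory Submission
  imports Defs
begin

lemma convex_positive_snd: "convex {p :: 'a::real_vector \<times> real. snd p > 0}"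
proof -
  have "{p :: 'a \<times> real. snd p > 0} = snd -` {0<..}" by auto
  then show ?thesis by (simp add: convex_linear_vimage linear_snd)
qed

lemma convex_on_compose_affine:
  fixes f :: "'a::real_vector \<Rightarrow> real"
  assumes "convex_on UNIV f"
  shows "convex_on UNIV (\<lambda>x. f (c *\<^sub>R x + b))"
proof (rule convex_onI)
  fix t :: real and x y :: 'a
  assume "0 < t" "t < 1"
  have "c *\<^sub>R ((1 - t) *\<^sub>R x + t *\<^sub>R y) + b = (1 - t) *\<^sub>R (c *\<^sub>R x + b) + t *\<^sub>R (c *\<^sub>R y + b)"
    by (simp add: algebra_simps)
  then show "f (c *\<^sub>R ((1 - t) *\<^sub>R x + t *\<^sub>R y) + b) \<le> (1 - t) * f (c *\<^sub>R x + b) + t * f (c *\<^sub>R y + b)"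
    using convex_onD[OF assms, of t] \<open>0 < t\<close> \<open>t < 1\<close> by simp
qed simp

lemma convex_on_perspective:
  fixes f :: "'a::real_vector \<Rightarrow> real"
  assumes "convex_on UNIV f"
  shows "convex_on {p. snd p > 0} (\<lambda>p. snd p * f (fst p /\<^sub>R snd p))"
proof (rule convex_onI)
  fix t :: real and p q :: "'a \<times> real"
  assume t: "0 < t" "t < 1" and p: "p \<in> {p. snd p > 0}" and q: "q \<in> {p. snd p > 0}"
  obtain a s b r where pq: "p = (a, s)" "q = (b, r)" by fastforce
  have s: "s > 0" and r: "r > 0" using p q pq by auto
  define S where "S = (1 - t) * s + t * r"
  define w where "w = t * r / S"
  have S: "S > 0" using t s r by (simp add: S_def add_pos_pos)
  have w: "0 \<le> w" "w \<le> 1" using t s r S by (auto simp: w_def S_def field_simps)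
  have weights: "S * (1 - w) = (1 - t) * s" "S * w = t * r"
    using S by (simp_all add: w_def S_def field_simps)
  have mid: "((1 - t) *\<^sub>R a + t *\<^sub>R b) /\<^sub>R S = (1 - w) *\<^sub>R (a /\<^sub>R s) + w *\<^sub>R (b /\<^sub>R r)"
  proof -
    have "(1 - w) * inverse s = inverse S * (1 - t)" "w * inverse r = inverse S * t"
      using weights s r S by (simp_all add: field_simps)
    then show ?thesis by (simp add: scaleR_add_right)
  qed
  have "f ((1 - w) *\<^sub>R (a /\<^sub>R s) + w *\<^sub>R (b /\<^sub>R r)) \<le> (1 - w) * f (a /\<^sub>R s) + w * f (b /\<^sub>R r)"
    using w by (intro convex_onD[OF assms]) auto
  then have "S * f (((1 - t) *\<^sub>R a + t *\<^sub>R b) /\<^sub>R S) \<le> S * ((1 - w) * f (a /\<^sub>R s) + w * f (b /\<^sub>R r))"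
    unfolding mid using S by simp
  also have "\<dots> = (1 - t) * (s * f (a /\<^sub>R s)) + t * (r * f (b /\<^sub>R r))"
    by (simp add: distrib_left weights flip: mult.assoc)
  finally show "snd ((1 - t) *\<^sub>R p + t *\<^sub>R q) * f (fst ((1 - t) *\<^sub>R p + t *\<^sub>R q) /\<^sub>R snd ((1 - t) *\<^sub>R p + t *\<^sub>R q))
      \<le> (1 - t) * (snd p * f (fst p /\<^sub>R snd p)) + t * (snd q * f (fst q /\<^sub>R snd q))"
    by (simp add: pq S_def)
qed (rule convex_positive_snd)

lemma concave_on_subset: "concave_on T f \<Longrightarrow> S \<subseteq> T \<Longrightarrow> convex S \<Longrightarrow> concave_on S f"
  by (simp add: concave_on_def convex_on_subset)

lemma exp_concave_on_ln:
  assumes "concave_on S f" and "\<And>p. p \<in> S \<Longrightarrow> f p > 0"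
  shows "exp_concave_on S (\<lambda>p. ln (f p))"
  using assms by (fastforce simp: exp_concave_on_def concave_on_iff convex_def)

lemma concave_on_F_U: "concave_on {p. snd p > 0} (\<lambda>p. F_U \<rho> \<nu> (fst p) (snd p) x)"
proof -
  have "convex_on {p. snd p > 0} (\<lambda>p. snd p * exp ((x - \<nu>) *\<^sub>R (fst p /\<^sub>R snd p) + \<rho>))"
    by (intro convex_on_perspective convex_on_compose_affine exp_convex)
  moreover have "concave_on {p :: real \<times> real. snd p > 0} (\<lambda>p. 1 + snd p)"
    using convex_positive_snd by (simp add: concave_on_iff algebra_simps)
  ultimately have "concave_on {p. snd p > 0}
      (\<lambda>p. 1 + snd p - snd p * exp ((x - \<nu>) *\<^sub>R (fst p /\<^sub>R snd p) + \<rho>))"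
    by (rule concave_on_diff[rotated])
  moreover have "F_U \<rho> \<nu> l1 l3 x = 1 + l3 - l3 * exp ((x - \<nu>) *\<^sub>R (l1 /\<^sub>R l3) + \<rho>)" for l1 l3
    by (simp add: F_U_def algebra_simps divide_inverse)
  ultimately show ?thesis by simp
qed

lemma F_U_pos:
  assumes "0 \<le> l1" "0 < l3" "l3 < 1 / (exp (\<rho> + (l1 / l3) * (1 - \<nu>)) - 1)" "x \<le> 1"
  shows "F_U \<rho> \<nu> l1 l3 x > 0"
proof -
  define E where "E = exp (\<rho> + (l1 / l3) * (1 - \<nu>))"
  \<comment> \<open>as l3 > 0, the bound on l3 forces E > 1 without any sign condition on \<rho> (for E = 1 it reads l3 < 1 / 0 = 0)\<close>
  have l3_E: "l3 < 1 / (E - 1)"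
    using assms(3) by (simp only: E_def)
  then have "E > 1"
    using assms(2) zero_less_divide_1_iff[of "E - 1"] by linarith
  then have "l3 * (E - 1) < 1"
    using l3_E by (simp add: field_simps)
  moreover have "(l1 / l3) * (x - \<nu>) \<le> (l1 / l3) * (1 - \<nu>)"
    using assms by (intro mult_left_mono) auto
  then have "l3 * exp ((l1 / l3) * (x - \<nu>) + \<rho>) \<le> l3 * E"
    using assms(2) unfolding E_def by simp
  ultimately show ?thesis
    by (simp add: F_U_def algebra_simps)
qed

lemma F_L_affine: "F_L \<rho> \<gamma> \<beta> \<nu> x = 1 + (exp (\<beta> * x) - A_LB \<rho> \<beta> \<nu>) * \<gamma>"
  by (simp add: F_L_def algebra_simps)

lemma F_L_at_0: "F_L \<rho> \<gamma> \<beta> \<nu> 0 = 1 + \<gamma> * (1 - A_LB \<rho> \<beta> \<nu>)"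
  by (simp add: F_L_def)

lemma F_L_ge_F_L_at_0:
  assumes "0 \<le> \<gamma>" "0 \<le> \<beta>" "0 \<le> x"
  shows "1 + \<gamma> * (1 - A_LB \<rho> \<beta> \<nu>) \<le> F_L \<rho> \<gamma> \<beta> \<nu> x"
  using assms by (simp add: F_L_def mult_left_mono)

lemma F_L_pos:
  assumes "0 \<le> \<gamma>" "\<gamma> < 1 / (A_LB \<rho> \<beta> \<nu> - 1)" "0 \<le> \<beta>" "0 \<le> x"
  shows "F_L \<rho> \<gamma> \<beta> \<nu> x > 0"
proof -
  have "\<gamma> * (A_LB \<rho> \<beta> \<nu> - 1) < 1"
  proof (cases "A_LB \<rho> \<beta> \<nu> > 1")
    case True
    then show ?thesis using assms(2) by (simp add: field_simps)
  next
    case False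
    then show ?thesis using assms(1) mult_nonneg_nonpos[of \<gamma> "A_LB \<rho> \<beta> \<nu> - 1"] by simp
  qed
  then show ?thesis
    using F_L_ge_F_L_at_0[OF assms(1,3,4), of \<rho> \<nu>] by (simp add: algebra_simps)
qed

lemma F_L_ge_1:
  assumes "A_LB \<rho> \<beta> \<nu> \<le> 1" "0 \<le> \<gamma>" "0 \<le> \<beta>" "0 \<le> x"
  shows "F_L \<rho> \<gamma> \<beta> \<nu> x \<ge> 1"
  using F_L_ge_F_L_at_0[OF assms(2-4), of \<rho> \<nu>] mult_left_le[OF assms(1,2)]
  by (simp add: algebra_simps)

lemma concave_on_F_L: "convex S \<Longrightarrow> concave_on S (\<lambda>\<gamma>. F_L \<rho> \<gamma> \<beta> \<nu> x)"
  by (simp add: F_L_affine concave_on_iff algebra_simps)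

theorem mainTheorem14:
  fixes \<rho> \<nu> :: real
  assumes rho: "\<rho> > 0" and nu: "0 < \<nu>" "\<nu> < 1"
  shows
    \<comment> \<open>(I) positivity\<close>
    "(\<forall>tmin tmax l1 l3. 0 < tmin \<and> tmin \<le> tmax \<and> 0 \<le> l1 \<and> 0 < l3
        \<and> l1 / l3 \<in> {tmin..tmax}
        \<and> l3 < 1 / (exp (\<rho> + (l1 / l3) * (1 - \<nu>)) - 1)
        \<longrightarrow> (\<forall>x\<in>{0..1}. F_U \<rho> \<nu> l1 l3 x > 0))
     \<and> \<comment> \<open>(I) concavity in (lambda1, lambda3) on lambda3 > 0\<close>
     (\<forall>x\<in>{0..1}. concave_on {p :: real \<times> real. snd p > 0}
        (\<lambda>p. F_U \<rho> \<nu> (fst p) (snd p) x))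
     \<and> \<comment> \<open>(I) exp-concavity of log F_U\<close>
     (\<forall>x\<in>{0..1}. \<forall>K :: (real \<times> real) set.
        compact K \<and> convex K \<and> K \<subseteq> {p. snd p > 0}
        \<and> (\<forall>p\<in>K. F_U \<rho> \<nu> (fst p) (snd p) x > 0)
        \<longrightarrow> exp_concave_on K (\<lambda>p. ln (F_U \<rho> \<nu> (fst p) (snd p) x)))
     \<and> \<comment> \<open>(II)\<close>
     (\<forall>\<beta> > 0.
        \<comment> \<open>affine in gamma\<close>
        (\<forall>x\<in>{0..1}. \<exists>a b. \<forall>\<gamma>. F_L \<rho> \<gamma> \<beta> \<nu> x = a + b * \<gamma>)
        \<and> \<comment> \<open>minimum over x in [0,1]\<close>
        (\<forall>\<gamma> \<ge> 0. (\<exists>x\<in>{0..1}. F_L \<rho> \<gamma> \<beta> \<nu> x = 1 + \<gamma> * (1 - A_LB \<rho> \<beta> \<nu>))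
                  \<and> (\<forall>x\<in>{0..1}. 1 + \<gamma> * (1 - A_LB \<rho> \<beta> \<nu>) \<le> F_L \<rho> \<gamma> \<beta> \<nu> x))
        \<and> (A_LB \<rho> \<beta> \<nu> \<le> 1 \<longrightarrow> (\<forall>\<gamma> \<ge> 0. \<forall>x\<in>{0..1}. F_L \<rho> \<gamma> \<beta> \<nu> x \<ge> 1))
        \<and> (A_LB \<rho> \<beta> \<nu> > 1 \<longrightarrow> (\<forall>\<gamma>. 0 \<le> \<gamma> \<and> \<gamma> < 1 / (A_LB \<rho> \<beta> \<nu> - 1)
                \<longrightarrow> (\<forall>x\<in>{0..1}. F_L \<rho> \<gamma> \<beta> \<nu> x > 0)))
        \<and> (\<forall>x\<in>{0..1}. \<forall>a b. 0 \<le> a \<and> a \<le> b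
              \<and> (\<forall>\<gamma>\<in>{a..b}. F_L \<rho> \<gamma> \<beta> \<nu> x > 0)
              \<longrightarrow> exp_concave_on {a..b} (\<lambda>\<gamma>. ln (F_L \<rho> \<gamma> \<beta> \<nu> x))))"
proof (intro conjI allI impI ballI, goal_cases)
  case (1 tmin tmax l1 l3 x)
  then show ?case by (intro F_U_pos) auto
next
  case (2 x)
  show ?case by (rule concave_on_F_U)
next
  case (3 x K)
  then show ?case by (intro exp_concave_on_ln concave_on_subset[OF concave_on_F_U]) auto
next
  case (4 \<beta> x)
  show ?case by (intro exI allI) (rule F_L_affine)
next
  case (5 \<beta> \<gamma>)
  show ?case by (intro bexI[of _ 0]) (simp_all add: F_L_at_0)
next
  case (6 \<beta> \<gamma> x)
  then show ?case by (intro F_L_ge_F_L_at_0) auto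
next
  case (7 \<beta> \<gamma> x)
  then show ?case by (intro F_L_ge_1) auto
next
  case (8 \<beta> \<gamma> x)
  then show ?case by (intro F_L_pos) auto
next
  case (9 \<beta> x a b)
  then show ?case by (intro exp_concave_on_ln concave_on_F_L) auto
qed

end
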